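(* Let $n$ and $t$ be positive integers with $t\le n$, and let $G_{n,t}$ be the subgroup of the group $(\mathcal{P}[n],\triangle)$ generated by the sets $g_1,g_2,\ldots,g_t\subseteq[n]$ constructed below. Then (i) $|G_{n,t}|=2^t$; and (ii) every non-zero (i.e. non-empty) element of $G_{n,t}$ intersects every cyclic translate modulo $n$ of $[t]$, that is, every set of the form $\{s+1,s+2,\ldots,s+t\}$ with $s\in\mathbb{Z}$, where each element is replaced by its representative in $[n]=\{1,\ldots,n\}$ modulo $n$.
   Context: $\mathcal{P}[n]$ denotes the power set of $[n]=\{1,2,\ldots,n\}$, which is an abelian group under symmetric difference $A\triangle B=(A\setminus B)\cup(B\setminus A)$, with identity (zero) the empty set. For integers $y$ and $z>0$, $[y]_z$ denotes the least strictly positive residue of $y$ modulo $z$ (so $[y]_z\in\{1,\ldots,z\}$). Construction. Apply Euclid's algorithm to $n$ and $t$: set $r_{-1}=n$, $r_0=t$, and for $i\ge1$ write $r_{i-2}=q_ir_{i-1}+r_i$ with $0\le r_i<r_{i-1}$, stopping at the first index $k\ge1$ with $r_k=0$. Thus $n=q_1t+r_1$, $t=q_2r_1+r_2$, $r_1=q_3r_2+r_3$, $\ldots$, $r_{k-2}=q_kr_{k-1}$, with $t>r_1>\cdots>r_{k-1}>0$. Define partial sums $n_m=q_1t+q_3r_2+\cdots+q_{2m-1}r_{2m-2}$ (for $m\ge0$ with $2m-1\le k$) and $t_m=q_2r_1+q_4r_3+\cdots+q_{2m}r_{2m-1}$ (for $m\ge0$ with $2m\le k$), with $n_0=t_0=0$.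 (Then $n=n_m+r_{2m-1}$ and $t=t_m+r_{2m}$.) Fix $i$ with $1\le i\le t$, and let $a$ be maximal (among indices for which $t_a$ is defined) with $t_a<i$. For $0\le j\le a$ set $g_i^{(j)}=\{x\in(n_j,n_{j+1}]\cap\mathbb{Z}: x-n_j\equiv i-t_j \pmod{r_{2j}}\}$, and set $g_i^{(a+1)}=\{n_{a+1}+[i-t_a]_{r_{2a+1}}\}$ if $k\ne 2a+1$, and $g_i^{(a+1)}=\emptyset$ if $k=2a+1$. Finally let $g_i=\bigcup_{j=0}^{a+1}g_i^{(j)}\subseteq[n]$. *)

theory Defs
  imports Main "HOL-Algebra.Generated_Groups"
begin

text \<open>Euclid's algorithm on n and t. eu n t 0 = r_{-1} = n, eu n t (i+1) = r_i.\<close>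
fun eu :: "nat \<Rightarrow> nat \<Rightarrow> nat \<Rightarrow> nat" where
  "eu n t 0 = n"
| "eu n t (Suc 0) = t"
| "eu n t (Suc (Suc i)) = eu n t i mod eu n t (Suc i)"

definition rem :: "nat \<Rightarrow> nat \<Rightarrow> nat \<Rightarrow> nat" where
  "rem n t i = eu n t (Suc i)"

text \<open>q_i for i >= 1: r_{i-2} = q_i r_{i-1} + r_i\<close>
definition quo :: "nat \<Rightarrow> nat \<Rightarrow> nat \<Rightarrow> nat" where
  "quo n t i = eu n t (i - 1) div eu n t i"

definition euk :: "nat \<Rightarrow> nat \<Rightarrow> nat" where
  "euk n t = (LEAST k. 1 \<le> k \<and> rem n t k = 0)"

definition nn :: "nat \<Rightarrow> nat \<Rightarrow> nat \<Rightarrow> nat" where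
  "nn n t m = (\<Sum>j=1..m. quo n t (2*j - 1) * rem n t (2*j - 2))"

definition tt :: "nat \<Rightarrow> nat \<Rightarrow> nat \<Rightarrow> nat" where
  "tt n t m = (\<Sum>j=1..m. quo n t (2*j) * rem n t (2*j - 1))"

text \<open>a: maximal index with t_a defined (2a <= k) and t_a < i\<close>
definition aa :: "nat \<Rightarrow> nat \<Rightarrow> nat \<Rightarrow> nat" where
  "aa n t i = (GREATEST a. 2*a \<le> euk n t \<and> tt n t a < i)"

text \<open>least strictly positive residue [y]_z\<close>
definition lpr :: "int \<Rightarrow> int \<Rightarrow> int" where
  "lpr y z = (y - 1) mod z + 1"

definition gpart :: "nat \<Rightarrow> nat \<Rightarrow> nat \<Rightarrow> nat \<Rightarrow> nat set" where
  "gpart n t i j = {x. nn n t j < x \<and> x \<le> nn n t (Suc j) \<and>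
      (int x - int (nn n t j)) mod int (rem n t (2*j)) = (int i - int (tt n t j)) mod int (rem n t (2*j))}"

definition gtop :: "nat \<Rightarrow> nat \<Rightarrow> nat \<Rightarrow> nat set" where
  "gtop n t i = (let a = aa n t i in
     if euk n t = 2*a + 1 then {}
     else {nat (int (nn n t (Suc a)) + lpr (int i - int (tt n t a)) (int (rem n t (2*a + 1))))})"

definition gset :: "nat \<Rightarrow> nat \<Rightarrow> nat \<Rightarrow> nat set" where
  "gset n t i = (\<Union>j\<le>aa n t i. gpart n t i j) \<union> gtop n t i"

definition PG :: "nat \<Rightarrow> nat set monoid" where
  "PG n = \<lparr>carrier = Pow {1..n}, mult = (\<lambda>A B. (A - B) \<union> (B - A)), one = {}\<rparr>"

definition Gnt :: "nat \<Rightarrow> nat \<Rightarrow> nat set set" where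
  "Gnt n t = generate (PG n) (gset n t ` {1..t})"

definition ctrans :: "nat \<Rightarrow> nat \<Rightarrow> int \<Rightarrow> nat set" where
  "ctrans n t s = (\<lambda>j. nat (lpr (s + int j) (int n))) ` {1..t}"

end

theory Submission
  imports Defs
begin

text \<open>
  Identify a set \<open>S \<subseteq> [t]\<close> with the sum of the \<open>g_i\<close>, \<open>i \<in> S\<close>, in \<open>(P[n], \<triangle>)\<close>. Both claims
  follow once we know that for every cyclic window \<open>W\<close> of \<open>t\<close> consecutive points of \<open>[n]\<close> the
  \<open>t \<times> t\<close> incidence matrix \<open>(x \<in> g_i)\<close>, \<open>i \<in> [t]\<close>, \<open>x \<in> W\<close>, is invertible over GF(2): one
  window makes \<open>S \<mapsto> \<Sum> g_i\<close> injective, and the window at \<open>s\<close> contains a point of every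
  non-zero element.

  Write \<open>n = Q + r\<close> with \<open>Q = (n div t) t\<close> and \<open>r = n mod t\<close>. A point \<open>x \<le> Q\<close> lies in \<open>g_i\<close>
  iff \<open>x \<equiv> i (mod t)\<close>, while for \<open>Q < x \<le> n\<close> we have \<open>x \<in> g_i(n,t)\<close> iff \<open>i \<in> g_{x-Q}(t,r)\<close>:
  past \<open>Q\<close> the construction is the transpose of the one for \<open>(t,r)\<close>, one step further down
  Euclid's algorithm. Invertibility of all window matrices is then proved by induction along
  the algorithm: rows having a private column in the periodic part \<open>[1,Q]\<close> are eliminated,
  and the remaining rows meet \<open>[Q+1,n]\<close> in the transpose of a window or of a bottom-right
  corner of the \<open>(t,r)\<close>-matrix.
\<close>

section \<open>Sums of sets modulo two\<close>

definition symdiff_sum :: "('i \<Rightarrow> 'a set) \<Rightarrow> 'i set \<Rightarrow> 'a set" where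
  "symdiff_sum F S = {x. odd (card {i\<in>S. x \<in> F i})}"

lemma symdiff_sum_empty [simp]: "symdiff_sum F {} = {}"
  by (simp add: symdiff_sum_def)

lemma symdiff_sum_singleton [simp]: "symdiff_sum F {i} = F i"
  by (auto simp: symdiff_sum_def Collect_conv_if)

lemma odd_card_sym_diff:
  assumes "finite A" "finite B"
  shows "odd (card (sym_diff A B)) \<longleftrightarrow> odd (card A) \<noteq> odd (card B)"
proof -
  have "card (sym_diff A B) = card (A - B) + card (B - A)"
    using assms by (intro card_Un_disjoint) auto
  moreover have "card A = card (A - B) + card (A \<inter> B)" "card B = card (B - A) + card (A \<inter> B)"
    using assms card_Int_Diff[of A B] card_Int_Diff[of B A] by (simp_all add: Int_commute)
  ultimately show ?thesis by auto
qed

lemma symdiff_sum_sym_diff: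
  assumes "finite S" "finite T"
  shows "symdiff_sum F (sym_diff S T) = sym_diff (symdiff_sum F S) (symdiff_sum F T)"
proof -
  have "{i \<in> sym_diff S T. x \<in> F i} = sym_diff {i\<in>S. x \<in> F i} {i\<in>T. x \<in> F i}" for x
    by auto
  then show ?thesis
    using assms by (auto simp: symdiff_sum_def odd_card_sym_diff)
qed

lemma symdiff_sum_insert:
  assumes "finite S" "i \<notin> S"
  shows "symdiff_sum F (insert i S) = sym_diff (F i) (symdiff_sum F S)"
proof -
  have "insert i S = sym_diff {i} S" using assms(2) by auto
  then show ?thesis using assms(1) symdiff_sum_sym_diff[of "{i}" S F] by simp
qed

text \<open>Reading \<open>F i \<inter> X\<close> as row \<open>i\<close> of a 0-1 matrix with columns \<open>X\<close>: the rows indexed by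
  \<open>I\<close> are linearly independent over GF(2).\<close>
definition independent_on :: "('i \<Rightarrow> 'a set) \<Rightarrow> 'i set \<Rightarrow> 'a set \<Rightarrow> bool" where
  "independent_on F I X \<longleftrightarrow> (\<forall>S\<subseteq>I. S \<noteq> {} \<longrightarrow> symdiff_sum F S \<inter> X \<noteq> {})"

lemma independent_onD:
  "independent_on F I X \<Longrightarrow> S \<subseteq> I \<Longrightarrow> S \<noteq> {} \<Longrightarrow> symdiff_sum F S \<inter> X \<noteq> {}"
  by (simp add: independent_on_def)

lemma independent_on_mono:
  assumes "independent_on F I X" "X \<subseteq> Y" "J \<subseteq> I"
  shows "independent_on F J Y"
  unfolding independent_on_def
proof (intro allI impI)
  fix S assume "S \<subseteq> J" "S \<noteq> {}"
  then have "symdiff_sum F S \<inter> X \<noteq> {}" using assms(3) by (intro independent_onD[OF assms(1)]) auto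
  then show "symdiff_sum F S \<inter> Y \<noteq> {}" using assms(2) by blast
qed

lemma independent_on_empty [simp]: "independent_on F {} X"
  by (simp add: independent_on_def)

lemma inj_on_symdiff_sum:
  assumes "independent_on F I X" "finite I"
  shows "inj_on (\<lambda>S. symdiff_sum F S \<inter> X) (Pow I)"
proof (rule inj_onI)
  fix S T assume S: "S \<in> Pow I" "T \<in> Pow I" and eq: "symdiff_sum F S \<inter> X = symdiff_sum F T \<inter> X"
  have "finite S" "finite T" using S assms(2) finite_subset by auto
  then have "symdiff_sum F (sym_diff S T) \<inter> X = {}"
    using eq by (auto simp: symdiff_sum_sym_diff)
  moreover have "sym_diff S T \<subseteq> I" using S by auto
  ultimately have "sym_diff S T = {}" using independent_onD[OF assms(1)] by blast
  then show "S = T" by blast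
qed

lemma even_sum_iff_even_card_odd:
  "finite T \<Longrightarrow> even (\<Sum>x\<in>T. f x :: nat) \<longleftrightarrow> even (card {x\<in>T. odd (f x)})"
proof (induction T rule: finite_induct)
  case (insert a T)
  have "{x \<in> insert a T. odd (f x)} = (if odd (f a) then insert a {x\<in>T. odd (f x)} else {x\<in>T. odd (f x)})"
    by auto
  with insert show ?case by simp
qed simp

lemma card_symdiff_sum_image:
  assumes "independent_on F I X" "finite I"
  shows "card (symdiff_sum F ` Pow I) = 2 ^ card I"
proof -
  have "inj_on ((\<lambda>A. A \<inter> X) \<circ> symdiff_sum F) (Pow I)"
    using inj_on_symdiff_sum[OF assms] by (simp add: comp_def)
  then have "inj_on (symdiff_sum F) (Pow I)" by (rule inj_on_imageI2)
  then show ?thesis using assms(2) by (simp add: card_image card_Pow)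
qed

lemma sum_card_incidences_swap:
  assumes "finite S" "finite T"
  shows "(\<Sum>i\<in>S. card {x\<in>T. R i x}) = (\<Sum>x\<in>T. card {i\<in>S. R i x})"
proof -
  have "(\<Sum>i\<in>S. card {x\<in>T. R i x}) = (\<Sum>i\<in>S. \<Sum>x\<in>T. of_bool (R i x))"
    using assms by (simp add: Int_def)
  also have "\<dots> = (\<Sum>x\<in>T. \<Sum>i\<in>S. of_bool (R i x))"
    by (rule sum.swap)
  also have "\<dots> = (\<Sum>x\<in>T. card {i\<in>S. R i x})"
    using assms by (simp add: Int_def)
  finally show ?thesis .
qed

text \<open>Independence makes \<open>S \<mapsto> symdiff_sum F S \<inter> X\<close> a bijection from \<open>Pow I\<close> onto
  \<open>Pow X\<close>. Given \<open>T\<close>, pick \<open>S\<close> whose sum meets \<open>X\<close> in a single point of \<open>T\<close>; double counting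
  the incidences between \<open>S\<close> and \<open>T\<close> then yields some \<open>i \<in> S\<close> whose row meets \<open>T\<close> oddly.\<close>
lemma independent_on_transpose:
  assumes fin: "finite I" "finite X" and card: "card I = card X" and ind: "independent_on F I X"
  shows "independent_on (\<lambda>x. {i. x \<in> F i}) X I"
  unfolding independent_on_def
proof (intro allI impI)
  fix T assume T: "T \<subseteq> X" "T \<noteq> {}"
  let ?sum = "\<lambda>S. symdiff_sum F S \<inter> X"
  have "card (?sum ` Pow I) = card (Pow X)"
    using card_image[OF inj_on_symdiff_sum[OF ind fin(1)]] fin card by (simp add: card_Pow)
  moreover have "?sum ` Pow I \<subseteq> Pow X" by blast
  ultimately have onto: "?sum ` Pow I = Pow X"
    using fin(2) by (intro card_subset_eq) simp_all
  obtain b where b: "b \<in> T" using T by blast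
  then have "{b} \<in> ?sum ` Pow I" using onto T(1) by auto
  then obtain S where S: "S \<subseteq> I" "symdiff_sum F S \<inter> X = {b}" by auto
  have finS: "finite S" "finite T" using S(1) T(1) fin finite_subset by auto
  have "(\<Sum>i\<in>S. card {x\<in>T. x \<in> F i}) = (\<Sum>x\<in>T. card {i\<in>S. x \<in> F i})"
    using finS by (rule sum_card_incidences_swap)
  moreover have "{x\<in>T. odd (card {i\<in>S. x \<in> F i})} = symdiff_sum F S \<inter> X \<inter> T"
    using T(1) by (auto simp: symdiff_sum_def)
  then have "{x\<in>T. odd (card {i\<in>S. x \<in> F i})} = {b}"
    using S(2) b by simp
  ultimately have "odd (\<Sum>i\<in>S. card {x\<in>T. x \<in> F i})"
    using even_sum_iff_even_card_odd[OF finS(2), of "\<lambda>x. card {i\<in>S. x \<in> F i}"] by simp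
  then obtain i where "i \<in> S" "odd (card {x\<in>T. x \<in> F i})"
    using dvd_sum[of S 2 "\<lambda>i. card {x\<in>T. x \<in> F i}"] by blast
  then have "i \<in> symdiff_sum (\<lambda>x. {i. x \<in> F i}) T \<inter> I"
    using S(1) by (simp add: symdiff_sum_def subset_iff)
  then show "symdiff_sum (\<lambda>x. {i. x \<in> F i}) T \<inter> I \<noteq> {}" by blast
qed

lemma independent_on_image_columns:
  assumes "independent_on F I X" "\<And>i x. i \<in> I \<Longrightarrow> x \<in> X \<Longrightarrow> h x \<in> G i \<longleftrightarrow> x \<in> F i"
  shows "independent_on G I (h ` X)"
  unfolding independent_on_def
proof (intro allI impI)
  fix S assume S: "S \<subseteq> I" "S \<noteq> {}"
  then have "symdiff_sum F S \<inter> X \<noteq> {}" by (rule independent_onD[OF assms(1)])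
  then obtain x where x: "x \<in> X" "odd (card {i\<in>S. x \<in> F i})"
    unfolding symdiff_sum_def by blast
  have "{i\<in>S. h x \<in> G i} = {i\<in>S. x \<in> F i}" using S(1) x(1) assms(2) by blast
  then have "h x \<in> symdiff_sum G S" using x(2) by (simp add: symdiff_sum_def)
  then show "symdiff_sum G S \<inter> h ` X \<noteq> {}" using x(1) by blast
qed

lemma symdiff_sum_subset: "symdiff_sum F S \<subseteq> (\<Union>i\<in>S. F i)"
proof
  fix x assume "x \<in> symdiff_sum F S"
  then have "odd (card {i\<in>S. x \<in> F i})" by (simp add: symdiff_sum_def)
  then have "{i\<in>S. x \<in> F i} \<noteq> {}" by (intro notI) simp
  then show "x \<in> (\<Union>i\<in>S. F i)" by blast
qed

lemma independent_on_drop_columns: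
  assumes "independent_on F I (X \<union> Y)" "\<And>i. i \<in> I \<Longrightarrow> F i \<inter> Y = {}"
  shows "independent_on F I X"
  unfolding independent_on_def
proof (intro allI impI)
  fix S assume S: "S \<subseteq> I" "S \<noteq> {}"
  then have "symdiff_sum F S \<inter> (X \<union> Y) \<noteq> {}"
    by (rule independent_onD[OF assms(1)])
  moreover have "symdiff_sum F S \<inter> Y = {}"
    using S(1) assms(2) symdiff_sum_subset[of F S] by blast
  ultimately show "symdiff_sum F S \<inter> X \<noteq> {}" by blast
qed

lemma independent_on_private_columns:
  assumes private_column: "\<And>i. i \<in> I - B \<Longrightarrow> \<exists>x\<in>X. \<forall>j\<in>I. x \<in> F j \<longleftrightarrow> j = i"
    and ind: "independent_on F B X"
  shows "independent_on F I X"
  unfolding independent_on_def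
proof (intro allI impI)
  fix S assume S: "S \<subseteq> I" "S \<noteq> {}"
  show "symdiff_sum F S \<inter> X \<noteq> {}"
  proof (cases "S \<subseteq> B")
    case True
    then show ?thesis using independent_onD[OF ind _ S(2)] by blast
  next
    case False
    then obtain i where i: "i \<in> S" "i \<in> I - B" using S(1) by blast
    then obtain x where "x \<in> X" "\<forall>j\<in>I. x \<in> F j \<longleftrightarrow> j = i" using private_column by blast
    then have "{j\<in>S. x \<in> F j} = {i}" using i S(1) by auto
    then have "x \<in> symdiff_sum F S" by (simp add: symdiff_sum_def)
    then show ?thesis using \<open>x \<in> X\<close> by blast
  qed
qed

section \<open>The generated subgroup\<close>

lemma PG_inv: "h \<subseteq> {1..n} \<Longrightarrow> inv\<^bsub>PG n\<^esub> h = h"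
  unfolding m_inv_def PG_def by (rule the_equality) auto

lemma generate_PG_in_symdiff_sums:
  assumes "finite I" "\<And>i. i \<in> I \<Longrightarrow> F i \<subseteq> {1..n}" "A \<in> generate (PG n) (F ` I)"
  shows "A \<in> symdiff_sum F ` Pow I"
  using assms(3)
proof (induction rule: generate.induct)
  case one
  have "symdiff_sum F {} = \<one>\<^bsub>PG n\<^esub>" by (simp add: PG_def)
  then show ?case by blast
next
  case (incl h)
  then show ?case by force
next
  case (inv h)
  then obtain i where "i \<in> I" "h = F i" by blast
  then have "inv\<^bsub>PG n\<^esub> h = symdiff_sum F {i}" using assms(2) by (simp add: PG_inv)
  then show ?case using \<open>i \<in> I\<close> by blast
next
  case (eng h1 h2)
  then obtain S T where ST: "S \<subseteq> I" "T \<subseteq> I" "h1 = symdiff_sum F S" "h2 = symdiff_sum F T"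
    by blast
  then have "h1 \<otimes>\<^bsub>PG n\<^esub> h2 = symdiff_sum F (sym_diff S T)"
    using finite_subset[OF _ assms(1)] symdiff_sum_sym_diff[of S T F] by (simp add: PG_def)
  then show ?case using ST by blast
qed

lemma symdiff_sum_in_generate_PG:
  assumes "finite S" "S \<subseteq> I"
  shows "symdiff_sum F S \<in> generate (PG n) (F ` I)"
  using assms
proof (induction rule: finite_induct)
  case empty
  show ?case using generate.one[of "PG n"] by (simp add: PG_def)
next
  case (insert i S)
  have "F i \<otimes>\<^bsub>PG n\<^esub> symdiff_sum F S \<in> generate (PG n) (F ` I)"
    using insert by (auto intro: generate.eng generate.incl)
  then show ?case using insert by (simp add: PG_def symdiff_sum_insert)
qed

lemma generate_PG:
  assumes "finite I" "\<And>i. i \<in> I \<Longrightarrow> F i \<subseteq> {1..n}"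
  shows "generate (PG n) (F ` I) = symdiff_sum F ` Pow I"
proof
  show "generate (PG n) (F ` I) \<subseteq> symdiff_sum F ` Pow I"
  proof
    fix A assume "A \<in> generate (PG n) (F ` I)"
    with assms show "A \<in> symdiff_sum F ` Pow I" by (rule generate_PG_in_symdiff_sums)
  qed
  show "symdiff_sum F ` Pow I \<subseteq> generate (PG n) (F ` I)"
    using symdiff_sum_in_generate_PG finite_subset[OF _ assms(1)] by blast
qed

section \<open>Euclid's algorithm\<close>

lemma rem_0 [simp]: "rem n t 0 = t"
  and rem_Suc_0 [simp]: "rem n t (Suc 0) = n mod t"
  and rem_Suc_Suc [simp]: "rem n t (Suc (Suc j)) = rem n t j mod rem n t (Suc j)"
  by (simp_all add: rem_def)

lemma quo_Suc_0: "quo n t (Suc 0) = n div t"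
  and quo_Suc_Suc: "quo n t (Suc (Suc j)) = rem n t j div rem n t (Suc j)"
  by (simp_all add: quo_def rem_def)

lemma nn_0 [simp]: "nn n t 0 = 0"
  and nn_Suc: "nn n t (Suc m) = nn n t m + quo n t (Suc (2*m)) * rem n t (2*m)"
  by (simp_all add: nn_def)

lemma tt_0 [simp]: "tt n t 0 = 0"
  and tt_Suc: "tt n t (Suc m) = tt n t m + quo n t (Suc (Suc (2*m))) * rem n t (Suc (2*m))"
  by (simp_all add: tt_def)

lemma nn_Suc_add_rem: "nn n t (Suc m) + rem n t (Suc (2*m)) = n"
proof (induction m)
  case (Suc m)
  have "rem n t (Suc (2*m)) div rem n t (Suc (Suc (2*m))) * rem n t (Suc (Suc (2*m)))
      + rem n t (Suc (2*m)) mod rem n t (Suc (Suc (2*m))) = rem n t (Suc (2*m))"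
    by (rule div_mult_mod_eq)
  with Suc show ?case by (simp add: nn_Suc quo_Suc_Suc)
qed (simp add: nn_Suc quo_Suc_0)

lemma tt_add_rem: "tt n t m + rem n t (2*m) = t"
proof (induction m)
  case (Suc m)
  have "rem n t (2*m) div rem n t (Suc (2*m)) * rem n t (Suc (2*m))
      + rem n t (2*m) mod rem n t (Suc (2*m)) = rem n t (2*m)"
    by (rule div_mult_mod_eq)
  with Suc show ?case by (simp add: tt_Suc quo_Suc_Suc)
qed simp

lemma nn_mono: "m \<le> m' \<Longrightarrow> nn n t m \<le> nn n t m'"
  by (induction m' rule: dec_induct) (auto simp: nn_Suc)

lemma tt_mono: "m \<le> m' \<Longrightarrow> tt n t m \<le> tt n t m'"
  by (induction m' rule: dec_induct) (auto simp: tt_Suc)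

lemma nn_le: "nn n t m \<le> n"
  using nn_Suc_add_rem[of n t "m - 1"] by (cases m) auto

lemma rem_Suc_less: "0 < rem n t j \<Longrightarrow> rem n t (Suc j) < rem n t j"
  by (cases j) simp_all

lemma euclid_terminates:
  assumes "0 < t" shows "\<exists>k\<ge>1. rem n t k = 0"
proof (rule ccontr)
  assume "\<not> ?thesis"
  then have pos: "0 < rem n t k" for k
    using assms by (cases k) auto
  have "rem n t j + j \<le> t" for j
  proof (induction j)
    case (Suc j)
    then show ?case using rem_Suc_less[OF pos[of j]] by simp
  qed simp
  from this[of "Suc t"] pos[of "Suc t"] show False by simp
qed

lemma
  assumes "0 < t"
  shows euk_ge_1: "1 \<le> euk n t"
    and rem_euk: "rem n t (euk n t) = 0"
    and rem_pos_below_euk: "j < euk n t \<Longrightarrow> 0 < rem n t j"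
proof -
  let ?P = "\<lambda>k. 1 \<le> k \<and> rem n t k = 0"
  obtain k where "?P k" using euclid_terminates[OF assms] by blast
  then have "?P (euk n t)" unfolding euk_def by (rule LeastI)
  then show "1 \<le> euk n t" "rem n t (euk n t) = 0" by auto
  assume "j < euk n t"
  then have "\<not> ?P j" unfolding euk_def by (rule not_less_Least)
  with assms show "0 < rem n t j" by (cases j) simp_all
qed

lemma rem_euk_add_even:
  assumes "0 < t" shows "rem n t (euk n t + 2*m) = 0"
proof (induction m)
  case (Suc m)
  have "euk n t + 2 * Suc m = Suc (Suc (euk n t + 2*m))" by simp
  with Suc show ?case by simp
qed (simp add: rem_euk[OF assms])

lemma quo_eq_0_beyond_euk:
  assumes "0 < t" "euk n t < j" shows "quo n t j = 0"
proof -
  define j' where "j' = j - 2"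
  have j': "j = Suc (Suc j')"
    using assms(2) euk_ge_1[OF assms(1), of n] unfolding j'_def by simp
  define d where "d = Suc j' - euk n t"
  have d: "Suc j' = euk n t + d" using assms(2) j' unfolding d_def by simp
  have "rem n t (Suc j') = 0 \<or> rem n t j' = 0"
  proof (cases "even d")
    case True
    then obtain m where "d = 2*m" by blast
    then show ?thesis using d rem_euk_add_even[OF assms(1), of n m] by simp
  next
    case False
    then obtain m where "d = 2*m + 1" using oddE by blast
    then show ?thesis using d rem_euk_add_even[OF assms(1), of n m] by simp
  qed
  then show ?thesis using j' by (auto simp: quo_Suc_Suc)
qed

lemma le_euk_if_quo_pos: "0 < t \<Longrightarrow> 0 < quo n t j \<Longrightarrow> j \<le> euk n t"
  using quo_eq_0_beyond_euk by (metis not_less less_irrefl)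

lemma le_aa_iff:
  assumes "0 < i"
  shows "j \<le> aa n t i \<longleftrightarrow> 2*j \<le> euk n t \<and> tt n t j < i"
proof -
  let ?P = "\<lambda>a. 2*a \<le> euk n t \<and> tt n t a < i"
  have bound: "?P a \<Longrightarrow> a \<le> euk n t" for a by simp
  have "?P (aa n t i)"
    unfolding aa_def by (rule GreatestI_nat[of _ 0 "euk n t"]) (use assms bound in auto)
  moreover have "j \<le> aa n t i" if "?P j"
    unfolding aa_def using that bound by (blast intro: Greatest_le_nat)
  moreover have "j \<le> aa n t i \<Longrightarrow> tt n t j \<le> tt n t (aa n t i)"
    by (rule tt_mono)
  ultimately show ?thesis by auto
qed

lemma lpr_eq:
  assumes "0 < (r::int)" "1 \<le> y" "y \<le> r" "y mod r = z mod r"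
  shows "lpr z r = y"
proof -
  have "(z - 1) mod r = (y - 1) mod r" using assms(4) by (metis mod_diff_cong)
  also have "\<dots> = y - 1" using assms by (simp add: mod_pos_pos_trivial)
  finally show ?thesis by (simp add: lpr_def)
qed

lemma
  assumes "0 < (r::int)"
  shows lpr_ge_1: "1 \<le> lpr z r" and lpr_le: "lpr z r \<le> r" and lpr_mod: "lpr z r mod r = z mod r"
proof -
  show "1 \<le> lpr z r" "lpr z r \<le> r"
    using assms by (simp_all add: lpr_def) (smt (verit) pos_mod_bound)
  have "lpr z r mod r = (z - 1 + 1) mod r" unfolding lpr_def by (metis mod_add_left_eq)
  then show "lpr z r mod r = z mod r" by simp
qed

section \<open>Membership in the generators\<close>

lemma mod_eq_iff_eq_atLeastAtMost:
  assumes "i \<in> {1..t}" "j \<in> {1..t::nat}"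
  shows "i mod t = j mod t \<longleftrightarrow> i = j"
proof -
  have "k mod t = (if k = t then 0 else k)" if "k \<in> {1..t}" for k
    using that by auto
  then show ?thesis using assms by auto
qed

lemma exists_mod_eq_in_interval:
  assumes "0 < t" "i \<le> t"
  shows "\<exists>x\<in>{s+1..s+t}. x mod t = i mod (t::nat)"
proof -
  define x where "x = i + t * ((s + t - i) div t)"
  have "t * ((s + t - i) div t) + (s + t - i) mod t = s + t - i" by simp
  moreover have "(s + t - i) mod t < t" using assms by simp
  ultimately have "s < x" "x \<le> s + t" using assms unfolding x_def by linarith+
  then have "x \<in> {s+1..s+t}" by simp
  moreover have "x mod t = i mod t" unfolding x_def by simp
  ultimately show ?thesis by (intro bexI[of _ x])
qed

lemma le_div_mult_self:
  assumes "0 < t" "t \<le> n" shows "t \<le> n div t * (t::nat)"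
proof -
  have "0 < n div t" using assms by (simp add: div_greater_zero_iff)
  then show ?thesis using mult_le_mono1[of 1 "n div t" t] by simp
qed

text \<open>\<open>block_mem n t i x j\<close> is \<open>x \<in> g_i^(j)\<close> with the bound \<open>j \<le> a\<close> replaced by the
  equivalent \<open>t_j < i\<close>; \<open>tail_mem n t i x j\<close> is \<open>x \<in> g_i^(a+1)\<close>, where \<open>j = a\<close> is
  characterised by \<open>t_j < i \<le> t_(j+1)\<close>.\<close>
definition block_mem :: "nat \<Rightarrow> nat \<Rightarrow> nat \<Rightarrow> nat \<Rightarrow> nat \<Rightarrow> bool" where
  "block_mem n t i x j \<longleftrightarrow> nn n t j < x \<and> x \<le> nn n t (Suc j) \<and> tt n t j < i \<and>
     (int x - int (nn n t j)) mod int (rem n t (2*j)) = (int i - int (tt n t j)) mod int (rem n t (2*j))"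

definition tail_mem :: "nat \<Rightarrow> nat \<Rightarrow> nat \<Rightarrow> nat \<Rightarrow> nat \<Rightarrow> bool" where
  "tail_mem n t i x j \<longleftrightarrow> tt n t j < i \<and> i \<le> tt n t (Suc j) \<and> nn n t (Suc j) < x \<and> x \<le> n \<and>
     (int x - int (nn n t (Suc j))) mod int (rem n t (Suc (2*j)))
       = (int i - int (tt n t j)) mod int (rem n t (Suc (2*j)))"

lemma mem_gparts_iff:
  assumes "0 < t" "0 < i"
  shows "(\<exists>j\<le>aa n t i. x \<in> gpart n t i j) \<longleftrightarrow> (\<exists>j. block_mem n t i x j)"
proof -
  have "j \<le> aa n t i" if "block_mem n t i x j" for j
  proof -
    have "0 < quo n t (Suc (2*j))"
      using that nn_Suc[of n t j] unfolding block_mem_def by (metis add_0_right mult_0 not_gr0 not_le)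
    then have "Suc (2*j) \<le> euk n t" by (rule le_euk_if_quo_pos[OF assms(1)])
    then show ?thesis using that le_aa_iff[OF assms(2), of j n t] unfolding block_mem_def by simp
  qed
  moreover have "tt n t j < i" if "j \<le> aa n t i" for j
    using that le_aa_iff[OF assms(2), of j n t] by simp
  ultimately show ?thesis unfolding block_mem_def gpart_def by blast
qed

lemma eq_aa_if_tt_bounds:
  assumes "0 < t" "tt n t j < i" "i \<le> tt n t (Suc j)"
  shows "j = aa n t i" "Suc (2*j) < euk n t"
proof -
  have "0 < quo n t (Suc (Suc (2*j)))"
    using assms(2,3) tt_Suc[of n t j] by (metis add_0_right mult_0 not_gr0 not_less)
  from le_euk_if_quo_pos[OF assms(1) this] show euk: "Suc (2*j) < euk n t"
    by (simp add: Suc_le_eq)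
  have i: "0 < i" using assms(2) by simp
  have "j \<le> aa n t i" using euk assms(2) le_aa_iff[OF i, of j n t] by simp
  moreover have "\<not> Suc j \<le> aa n t i" using assms(3) le_aa_iff[OF i, of "Suc j" n t] by simp
  ultimately show "j = aa n t i" by simp
qed

lemma tt_bounds_aa:
  assumes "0 < t" "0 < i" "i \<le> t" "euk n t \<noteq> Suc (2 * aa n t i)"
  shows "Suc (2 * aa n t i) < euk n t" "i \<le> tt n t (Suc (aa n t i))"
proof -
  let ?a = "aa n t i"
  have a: "2 * ?a \<le> euk n t" "tt n t ?a < i" using le_aa_iff[OF assms(2), of ?a n t] by simp_all
  have "2 * ?a \<noteq> euk n t"
    using tt_add_rem[of n t ?a] rem_euk[OF assms(1), of n] a(2) assms(3) by auto
  with a(1) assms(4) show euk: "Suc (2 * ?a) < euk n t" by simp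
  show "i \<le> tt n t (Suc ?a)" using euk le_aa_iff[OF assms(2), of "Suc ?a" n t] by simp
qed

lemma mem_gtop_iff:
  assumes "0 < t" "0 < i" "i \<le> t"
  shows "x \<in> gtop n t i \<longleftrightarrow> (\<exists>j. tail_mem n t i x j)"
proof
  let ?a = "aa n t i"
  let ?N = "nn n t (Suc ?a)" and ?r = "rem n t (Suc (2 * ?a))"
  let ?y = "lpr (int i - int (tt n t ?a)) (int ?r)"
  assume x: "x \<in> gtop n t i"
  then have euk: "euk n t \<noteq> Suc (2 * ?a)" and x_eq: "x = nat (int ?N + ?y)"
    unfolding gtop_def Let_def by (auto split: if_splits)
  note top = tt_bounds_aa[OF assms euk]
  have "0 < int ?r" using top(1) rem_pos_below_euk[OF assms(1)] by simp
  then have "1 \<le> ?y" "?y \<le> int ?r" "?y mod int ?r = (int i - int (tt n t ?a)) mod int ?r"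
    using lpr_ge_1 lpr_le lpr_mod by simp_all
  moreover have "?N + ?r = n" by (rule nn_Suc_add_rem)
  ultimately have "int x - int ?N = ?y" "?N < x" "x \<le> n"
    using x_eq by linarith+
  moreover have "tt n t ?a < i" using le_aa_iff[OF assms(2), of ?a n t] by simp
  ultimately have "tail_mem n t i x ?a"
    using top(2) lpr_mod[OF \<open>0 < int ?r\<close>] unfolding tail_mem_def by presburger
  then show "\<exists>j. tail_mem n t i x j" by blast
next
  assume "\<exists>j. tail_mem n t i x j"
  then obtain j where tail: "tail_mem n t i x j" by blast
  let ?N = "nn n t (Suc j)" and ?r = "rem n t (Suc (2*j))"
  have j: "j = aa n t i" "Suc (2*j) < euk n t"
    using eq_aa_if_tt_bounds[OF assms(1)] tail unfolding tail_mem_def by blast+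
  have "0 < int ?r" using j(2) rem_pos_below_euk[OF assms(1)] by simp
  moreover have "?N + ?r = n" by (rule nn_Suc_add_rem)
  ultimately have "lpr (int i - int (tt n t j)) (int ?r) = int x - int ?N"
    using tail unfolding tail_mem_def by (intro lpr_eq) auto
  then have "x = nat (int ?N + lpr (int i - int (tt n t j)) (int ?r))" by simp
  moreover have "euk n t \<noteq> Suc (2 * j)" using j(2) by simp
  ultimately show "x \<in> gtop n t i"
    unfolding gtop_def Let_def j(1)[symmetric] by simp
qed

lemma mem_gset_iff:
  assumes "0 < t" "i \<in> {1..t}"
  shows "x \<in> gset n t i \<longleftrightarrow> (\<exists>j. block_mem n t i x j \<or> tail_mem n t i x j)"
  using mem_gparts_iff[of t i n x] mem_gtop_iff[of t i x n] assms unfolding gset_def by auto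

lemma gset_subset:
  assumes "0 < t" "i \<in> {1..t}"
  shows "gset n t i \<subseteq> {1..n}"
proof
  fix x assume "x \<in> gset n t i"
  then obtain j where "block_mem n t i x j \<or> tail_mem n t i x j"
    using mem_gset_iff[OF assms] by blast
  then show "x \<in> {1..n}"
    using nn_le[of n t "Suc j"] unfolding block_mem_def tail_mem_def by auto
qed

lemma eu_mod_shift: "eu t (n mod t) j = eu n t (Suc j) \<and> eu t (n mod t) (Suc j) = eu n t (Suc (Suc j))"
  by (induction j) auto

lemma rem_mod_shift: "rem t (n mod t) j = rem n t (Suc j)"
  using eu_mod_shift by (simp add: rem_def)

lemma quo_mod_shift: "1 \<le> j \<Longrightarrow> quo t (n mod t) j = quo n t (Suc j)"
  using eu_mod_shift[of t n "j - 1"] eu_mod_shift[of t n j] by (simp add: quo_def)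

lemma nn_mod_shift: "nn t (n mod t) m = tt n t m"
  by (induction m) (simp_all add: nn_Suc tt_Suc quo_mod_shift rem_mod_shift)

lemma nn_1: "nn n t (Suc 0) = n div t * t"
  using nn_Suc[of n t 0] by (simp add: quo_Suc_0)

lemma tt_mod_shift: "tt t (n mod t) m + n div t * t = nn n t (Suc m)"
proof (induction m)
  case (Suc m)
  then show ?case
    using nn_Suc[of n t "Suc m"] by (simp add: tt_Suc quo_mod_shift rem_mod_shift)
qed (simp add: nn_1)

lemma block_mem_0_iff:
  "block_mem n t i x 0 \<longleftrightarrow> 0 < i \<and> 0 < x \<and> x \<le> n div t * t \<and> int x mod int t = int i mod int t"
  by (auto simp: block_mem_def nn_1)

text \<open>Above \<open>n div t * t\<close> positions and indices swap roles, as in the next step of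
  Euclid's algorithm.\<close>
lemma block_mem_Suc_iff:
  assumes "n div t * t < x" "i \<le> t"
  shows "block_mem n t i x (Suc j) \<longleftrightarrow> tail_mem t (n mod t) (x - n div t * t) i j"
proof -
  define Q where "Q = n div t * t"
  have a: "tt t (n mod t) j + Q = nn n t (Suc j)"
    and b: "tt t (n mod t) (Suc j) + Q = nn n t (Suc (Suc j))"
    unfolding Q_def by (rule tt_mod_shift)+
  have x: "Q < x" using assms(1) unfolding Q_def .
  have "int (x - Q) - int (tt t (n mod t) j) = int x - int (nn n t (Suc j))"
    using a x by (simp add: of_nat_diff flip: a)
  moreover have "tt t (n mod t) j < x - Q \<longleftrightarrow> nn n t (Suc j) < x" using a x by linarith
  moreover have "x - Q \<le> tt t (n mod t) (Suc j) \<longleftrightarrow> x \<le> nn n t (Suc (Suc j))" using b x by linarith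
  ultimately show ?thesis
    using assms(2) unfolding block_mem_def tail_mem_def Q_def[symmetric]
    by (auto simp: nn_mod_shift rem_mod_shift)
qed

lemma tail_mem_iff:
  assumes "n div t * t < x" "x \<le> n"
  shows "tail_mem n t i x j \<longleftrightarrow> block_mem t (n mod t) (x - n div t * t) i j"
proof -
  define Q where "Q = n div t * t"
  have a: "tt t (n mod t) j + Q = nn n t (Suc j)"
    unfolding Q_def by (rule tt_mod_shift)
  have x: "Q < x" using assms(1) unfolding Q_def .
  have "int (x - Q) - int (tt t (n mod t) j) = int x - int (nn n t (Suc j))"
    using a x by (simp add: of_nat_diff flip: a)
  moreover have "tt t (n mod t) j < x - Q \<longleftrightarrow> nn n t (Suc j) < x" using a x by linarith
  ultimately show ?thesis
    using assms(2) unfolding block_mem_def tail_mem_def Q_def[symmetric]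
    by (auto simp: nn_mod_shift rem_mod_shift)
qed

lemma mem_gset_low_iff:
  assumes "0 < t" "i \<in> {1..t}" "x \<in> {1..n div t * t}"
  shows "x \<in> gset n t i \<longleftrightarrow> x mod t = i mod t"
proof -
  have "n div t * t \<le> nn n t (Suc j)" for j
    using nn_mono[of "Suc 0" "Suc j" n t] by (simp add: nn_1)
  then have "\<not> block_mem n t i x (Suc j)" "\<not> tail_mem n t i x j" for j
    using assms(3) unfolding block_mem_def tail_mem_def by (meson atLeastAtMost_iff le_trans not_le)+
  then have "x \<in> gset n t i \<longleftrightarrow> block_mem n t i x 0"
    using mem_gset_iff[OF assms(1,2)] by (metis not0_implies_Suc)
  also have "\<dots> \<longleftrightarrow> x mod t = i mod t"
    using assms(2,3) by (simp add: block_mem_0_iff flip: zmod_int)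
  finally show ?thesis .
qed

lemma mem_gset_diagonal_iff:
  assumes "0 < t" "t \<le> n" "i \<in> {1..t}" "x \<in> {1..t}"
  shows "x \<in> gset n t i \<longleftrightarrow> x = i"
proof -
  have "x \<le> n div t * t"
    using assms(4) le_div_mult_self[OF assms(1,2)] by (meson atLeastAtMost_iff order.trans)
  then have "x \<in> gset n t i \<longleftrightarrow> x mod t = i mod t"
    using mem_gset_low_iff[OF assms(1,3)] assms(4) by simp
  also have "\<dots> \<longleftrightarrow> x = i" by (rule mod_eq_iff_eq_atLeastAtMost[OF assms(4,3)])
  finally show ?thesis .
qed

lemma mem_gset_high_iff:
  assumes "0 < t" "i \<in> {1..t}" "n div t * t < x" "x \<le> n"
  shows "x \<in> gset n t i \<longleftrightarrow> i \<in> gset t (n mod t) (x - n div t * t)"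
proof -
  have "x - n div t * t \<in> {1..n mod t}"
    unfolding atLeastAtMost_iff using assms(3,4) div_mult_mod_eq[of n t] by linarith
  moreover have "n mod t \<le> t" using assms(1) by (simp add: less_imp_le)
  ultimately have y: "0 < n mod t" "x - n div t * t \<in> {1..n mod t}" by auto
  have "\<not> block_mem n t i x 0" using assms(3) by (simp add: block_mem_0_iff)
  then have "x \<in> gset n t i \<longleftrightarrow> (\<exists>j. block_mem n t i x (Suc j) \<or> tail_mem n t i x j)"
    using mem_gset_iff[OF assms(1,2)] by (metis not0_implies_Suc)
  also have "\<dots> \<longleftrightarrow> i \<in> gset t (n mod t) (x - n div t * t)"
    using mem_gset_iff[OF y] assms block_mem_Suc_iff tail_mem_iff by auto
  finally show ?thesis .
qed

section \<open>Windows\<close>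

definition window :: "nat \<Rightarrow> nat \<Rightarrow> nat \<Rightarrow> nat set" where
  "window n t s = (if s + t \<le> n then {s+1..s+t} else {s+1..n} \<union> {1..s+t-n})"

definition windows_independent :: "nat \<Rightarrow> nat \<Rightarrow> bool" where
  "windows_independent n t \<longleftrightarrow> (\<forall>s<n. independent_on (gset n t) {1..t} (window n t s))"

lemma independent_corner:
  assumes "0 < t" "t \<le> n" "windows_independent n t" "m \<le> t"
  shows "independent_on (gset n t) {t-m+1..t} {n-m+1..n}"
proof (cases "m = 0")
  case False
  then have "independent_on (gset n t) {1..t} (window n t (n - m))"
    using assms unfolding windows_independent_def by auto
  moreover have "window n t (n - m) \<subseteq> {n-m+1..n} \<union> {1..t-m}"
    using assms unfolding window_def by auto
  ultimately have "independent_on (gset n t) {t-m+1..t} ({n-m+1..n} \<union> {1..t-m})"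
    by (rule independent_on_mono) auto
  moreover have "gset n t i \<inter> {1..t-m} = {}" if "i \<in> {t-m+1..t}" for i
  proof -
    have "x \<notin> gset n t i" if "x \<in> {1..t-m}" for x
      using mem_gset_diagonal_iff[OF assms(1,2), of i x] that \<open>i \<in> {t-m+1..t}\<close> by auto
    then show ?thesis by auto
  qed
  ultimately show ?thesis by (rule independent_on_drop_columns)
qed simp

context
  fixes n t :: nat
  assumes t_pos: "0 < t" and t_le: "t \<le> n"
begin

lemma low_column_private:
  assumes "i \<in> {1..t}" "x \<in> {1..n div t * t}" "x mod t = i mod t"
  shows "\<forall>j\<in>{1..t}. x \<in> gset n t j \<longleftrightarrow> j = i"
proof
  fix j assume j: "j \<in> {1..t}"
  have "x \<in> gset n t j \<longleftrightarrow> j mod t = i mod t"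
    using mem_gset_low_iff[OF t_pos j assms(2)] assms(3) by auto
  also have "\<dots> \<longleftrightarrow> j = i"
    using mod_eq_iff_eq_atLeastAtMost[OF j assms(1)] .
  finally show "x \<in> gset n t j \<longleftrightarrow> j = i" .
qed

lemma diagonal_column_private:
  assumes "i \<in> {1..t}"
  shows "\<forall>j\<in>{1..t}. i \<in> gset n t j \<longleftrightarrow> j = i"
  using mem_gset_diagonal_iff[OF t_pos t_le _ assms] by auto

lemma last_block_column_private:
  assumes "i \<in> {1..t}"
  shows "\<forall>j\<in>{1..t}. n div t * t - t + i \<in> gset n t j \<longleftrightarrow> j = i"
proof (rule low_column_private[OF assms])
  define Q where "Q = n div t * t"
  have "t \<le> Q" unfolding Q_def by (rule le_div_mult_self[OF t_pos t_le])
  then show "n div t * t - t + i \<in> {1..n div t * t}" using assms unfolding Q_def[symmetric] by auto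
  have "n div t * t - t = (n div t - 1) * t" by (simp add: diff_mult_distrib)
  then show "(n div t * t - t + i) mod t = i mod t" by simp
qed

lemma high_columns_independent:
  assumes "independent_on (gset t (n mod t)) A B"
    and "A \<subseteq> {1..n mod t}" "B \<subseteq> {1..t}" "card A = card B"
  shows "independent_on (gset n t) B ((+) (n div t * t) ` A)"
proof -
  have fin: "finite A" "finite B" using assms(2,3) finite_subset by auto
  have "independent_on (\<lambda>j. {y. j \<in> gset t (n mod t) y}) B A"
    by (rule independent_on_transpose[OF fin assms(4,1)])
  moreover have "n div t * t + y \<in> gset n t j \<longleftrightarrow> y \<in> {y. j \<in> gset t (n mod t) y}"
    if "j \<in> B" "y \<in> A" for j y
  proof -
    have "1 \<le> y" "y \<le> n mod t" using that assms(2) by auto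
    then have "n div t * t < n div t * t + y" "n div t * t + y \<le> n"
      using add_left_mono[of y "n mod t" "n div t * t"] by simp_all
    then show ?thesis
      using mem_gset_high_iff[OF t_pos, of j] that assms(3) by auto
  qed
  ultimately show ?thesis by (rule independent_on_image_columns)
qed

lemma independent_window_below:
  assumes "s + t \<le> n div t * t"
  shows "independent_on (gset n t) {1..t} {s+1..s+t}"
proof (rule independent_on_private_columns[where B = "{}"])
  fix i assume i: "i \<in> {1..t} - {}"
  then obtain x where x: "x \<in> {s+1..s+t}" "x mod t = i mod t"
    using exists_mod_eq_in_interval[OF t_pos, of i s] by auto
  moreover have "x \<in> {1..n div t * t}" using x(1) assms by auto
  ultimately show "\<exists>x\<in>{s+1..s+t}. \<forall>j\<in>{1..t}. x \<in> gset n t j \<longleftrightarrow> j = i"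
    using low_column_private[OF DiffD1[OF i]] by (intro bexI[of _ x]) simp_all
qed simp

lemma independent_window_across:
  assumes "n div t * t < s + t" "s + t \<le> n"
  shows "independent_on (gset n t) {1..t} {s+1..s+t}"
proof -
  define Q r m where "Q = n div t * t" and "r = n mod t" and "m = s + t - Q"
  have n: "n = Q + r" unfolding Q_def r_def by simp
  have tQ: "t \<le> Q" unfolding Q_def by (rule le_div_mult_self[OF t_pos t_le])
  have "r < t" unfolding r_def using t_pos by simp
  have s: "Q < s + t" "s + t \<le> Q + r" using assms n unfolding Q_def by simp_all
  then have mr: "0 < m" "m \<le> r" unfolding m_def by simp_all
  have r: "0 < r" "r \<le> t" using mr \<open>r < t\<close> by simp_all
  show ?thesis
  proof (rule independent_on_private_columns[where B = "{1..m}"])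
    fix i assume i: "i \<in> {1..t} - {1..m}"
    then have "Q - t + i \<in> {s+1..s+t}" using tQ s unfolding m_def by auto
    then show "\<exists>x\<in>{s+1..s+t}. \<forall>j\<in>{1..t}. x \<in> gset n t j \<longleftrightarrow> j = i"
      using last_block_column_private[OF DiffD1[OF i], folded Q_def] by (rule bexI[rotated])
  next
    show "independent_on (gset n t) {1..m} {s+1..s+t}"
    proof (rule independent_on_private_columns[where B = "{}"])
      fix i assume i: "i \<in> {1..m} - {}"
      have "\<forall>j\<in>{1..m}. Q + i \<in> gset n t j \<longleftrightarrow> j = i"
      proof
        fix j assume j: "j \<in> {1..m}"
        have "Q + i \<in> gset n t j \<longleftrightarrow> j \<in> gset t r i"
          using mem_gset_high_iff[OF t_pos, of j n "Q + i", folded Q_def r_def] i j mr n \<open>r < t\<close>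
          by auto
        also have "\<dots> \<longleftrightarrow> j = i"
          using mem_gset_diagonal_iff[OF r(1,2), of i j] i j mr by auto
        finally show "Q + i \<in> gset n t j \<longleftrightarrow> j = i" .
      qed
      moreover have "Q + i \<in> {s+1..s+t}" using i s \<open>r < t\<close> unfolding m_def by auto
      ultimately show "\<exists>x\<in>{s+1..s+t}. \<forall>j\<in>{1..m}. x \<in> gset n t j \<longleftrightarrow> j = i"
        by (rule bexI)
    qed simp
  qed
qed

text \<open>In a wrapping window the rows \<open>i \<le> s + t - n\<close> are isolated by their own column \<open>i\<close>;
  the others meet \<open>[n div t * t + 1, n]\<close> in the transpose of a corner, or (after isolating the
  rows seen in the last period) of a window, of the \<open>(t, n mod t)\<close>-matrix.\<close>
lemma independent_window_wrapping_tail: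
  assumes IH: "0 < n mod t \<Longrightarrow> windows_independent t (n mod t)"
    and s: "n div t * t \<le> s" "s < n" "n < s + t"
  shows "independent_on (gset n t) {1..t} ({s+1..n} \<union> {1..s+t-n})"
proof -
  define Q r m where "Q = n div t * t" and "r = n mod t" and "m = n - s"
  have n: "n = Q + r" unfolding Q_def r_def by simp
  have "r < t" unfolding r_def using t_pos by simp
  have m: "1 \<le> m" "m \<le> r" "s + t - n = t - m" using s n unfolding m_def Q_def by auto
  then have "independent_on (gset t r) {r-m+1..r} {t-m+1..t}"
    using independent_corner[of r t m] IH \<open>r < t\<close> unfolding r_def by simp
  then have "independent_on (gset n t) {t-m+1..t} ((+) Q ` {r-m+1..r})"
    using high_columns_independent[of "{r-m+1..r}" "{t-m+1..t}", folded Q_def r_def] m \<open>r < t\<close>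
    by auto
  moreover have "(+) Q ` {r-m+1..r} \<subseteq> {s+1..n} \<union> {1..t-m}" using m n unfolding m_def by auto
  ultimately have "independent_on (gset n t) {t-m+1..t} ({s+1..n} \<union> {1..t-m})"
    by (rule independent_on_mono) simp
  then show ?thesis
    unfolding m(3)
  proof (rule independent_on_private_columns[rotated])
    fix i assume "i \<in> {1..t} - {t-m+1..t}"
    then show "\<exists>x\<in>{s+1..n} \<union> {1..t-m}. \<forall>j\<in>{1..t}. x \<in> gset n t j \<longleftrightarrow> j = i"
      using diagonal_column_private[of i] by (intro bexI[of _ i]) auto
  qed
qed

lemma independent_window_wrapping_block:
  assumes IH: "0 < n mod t \<Longrightarrow> windows_independent t (n mod t)"
    and s: "s < n div t * t" "n < s + t"
  shows "independent_on (gset n t) {1..t} ({s+1..n} \<union> {1..s+t-n})"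
proof -
  define Q r b where "Q = n div t * t" and "r = n mod t" and "b = s + t - n"
  have n: "n = Q + r" unfolding Q_def r_def by simp
  have tQ: "t \<le> Q" unfolding Q_def by (rule le_div_mult_self[OF t_pos t_le])
  have br: "s + t - Q = b + r" "b + r < t" using s n unfolding b_def Q_def by auto
  have "independent_on (gset n t) {b+1..b+r} ({s+1..n} \<union> {1..b})"
  proof (cases "r = 0")
    case False
    then have "independent_on (gset t r) {1..r} (window t r b)"
      using IH br unfolding r_def windows_independent_def by simp
    moreover have "window t r b = {b+1..b+r}"
      using br unfolding window_def by simp
    ultimately have "independent_on (gset n t) {b+1..b+r} ((+) Q ` {1..r})"
      using high_columns_independent[of "{1..r}" "{b+1..b+r}", folded Q_def r_def] br
      by auto
    moreover have "(+) Q ` {1..r} \<subseteq> {s+1..n} \<union> {1..b}" using s n unfolding Q_def by auto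
    ultimately show ?thesis by (rule independent_on_mono) simp
  qed simp
  then show ?thesis
    unfolding b_def[symmetric]
  proof (rule independent_on_private_columns[rotated])
    fix i assume i: "i \<in> {1..t} - {b+1..b+r}"
    show "\<exists>x\<in>{s+1..n} \<union> {1..b}. \<forall>j\<in>{1..t}. x \<in> gset n t j \<longleftrightarrow> j = i"
    proof (cases "i \<le> b")
      case True
      then show ?thesis using i diagonal_column_private[of i] by (intro bexI[of _ i]) auto
    next
      case False
      then have "Q - t + i \<in> {s+1..n}" using i br tQ n by auto
      then show ?thesis
        using last_block_column_private[OF DiffD1[OF i], folded Q_def] by (intro bexI) auto
    qed
  qed
qed

lemma windows_independent_step:
  assumes "0 < n mod t \<Longrightarrow> windows_independent t (n mod t)"
  shows "windows_independent n t"
  unfolding windows_independent_def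
proof (intro allI impI)
  fix s assume "s < n"
  define Q where "Q = n div t * t"
  have "Q \<le> n" unfolding Q_def by simp
  then consider "s + t \<le> Q" | "Q < s + t" "s + t \<le> n" | "Q \<le> s" "n < s + t" | "s < Q" "n < s + t"
    by linarith
  then show "independent_on (gset n t) {1..t} (window n t s)"
    using independent_window_below[folded Q_def] independent_window_across[folded Q_def]
      independent_window_wrapping_tail[OF assms _ \<open>s < n\<close>, folded Q_def]
      independent_window_wrapping_block[OF assms, folded Q_def] \<open>Q \<le> n\<close>
    unfolding window_def by cases auto
qed

end

lemma gset_windows_independent: "0 < t \<Longrightarrow> t \<le> n \<Longrightarrow> windows_independent n t"
proof (induction t arbitrary: n rule: less_induct)
  case (less t)
  show ?case
  proof (rule windows_independent_step[OF less.prems])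
    assume "0 < n mod t"
    then show "windows_independent t (n mod t)"
      using less.IH[of "n mod t" t] less.prems by simp
  qed
qed

lemma window_subset_ctrans:
  assumes "0 < t" "t \<le> n"
  shows "window n t (nat (s mod int n)) \<subseteq> ctrans n t s"
proof
  fix x assume x: "x \<in> window n t (nat (s mod int n))"
  define s0 where "s0 = nat (s mod int n)"
  have s0: "int s0 = s mod int n" "s0 < n"
    using assms unfolding s0_def by (simp_all add: nat_less_iff)
  have x_range: "1 \<le> x" "x \<le> n" using x s0(2) assms(2) unfolding window_def s0_def[symmetric] by (auto split: if_splits)
  obtain j where j: "j \<in> {1..t}" "int s0 + int j = int x \<or> int s0 + int j = int x + int n"
  proof (cases "s0 < x")
    case True
    then have "x - s0 \<in> {1..t}" using x s0(2) x_range unfolding window_def s0_def[symmetric] by (auto split: if_splits)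
    then show ?thesis using that[of "x - s0"] True by auto
  next
    case False
    then have "x + n - s0 \<in> {1..t}" using x s0(2) x_range unfolding window_def s0_def[symmetric] by (auto split: if_splits)
    then show ?thesis using that[of "x + n - s0"] False s0(2) by auto
  qed
  have "(s + int j) mod int n = (int s0 + int j) mod int n" using s0(1) by (simp add: mod_add_left_eq)
  also have "\<dots> = int x mod int n" using j(2) by auto
  finally have "lpr (s + int j) (int n) = int x"
    using lpr_eq[of "int n" "int x" "s + int j"] x_range assms by simp
  then show "x \<in> ctrans n t s" unfolding ctrans_def using j(1) by force
qed

lemma Gnt_eq:
  assumes "0 < t" shows "Gnt n t = symdiff_sum (gset n t) ` Pow {1..t}"
  unfolding Gnt_def
proof (rule generate_PG)
  fix i assume "i \<in> {1..t}"
  then show "gset n t i \<subseteq> {1..n}" by (rule gset_subset[OF assms])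
qed simp

theorem lemma3:
  fixes n t :: nat
  assumes "0 < t" and "t \<le> n"
  shows "card (Gnt n t) = 2 ^ t \<and>
    (\<forall>A \<in> Gnt n t. A \<noteq> {} \<longrightarrow> (\<forall>s::int. A \<inter> ctrans n t s \<noteq> {}))"
proof
  have windows: "independent_on (gset n t) {1..t} (window n t s)" if "s < n" for s
    using gset_windows_independent[OF assms] that unfolding windows_independent_def by simp
  note Gnt = Gnt_eq[OF assms(1)]
  show "card (Gnt n t) = 2 ^ t"
    using card_symdiff_sum_image[OF windows[of 0]] assms by (simp add: Gnt)
  show "\<forall>A \<in> Gnt n t. A \<noteq> {} \<longrightarrow> (\<forall>s::int. A \<inter> ctrans n t s \<noteq> {})"
  proof (intro ballI impI allI)
    fix A s assume "A \<in> Gnt n t" "A \<noteq> {}"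
    then obtain S where S: "S \<subseteq> {1..t}" "A = symdiff_sum (gset n t) S"
      unfolding Gnt by auto
    with \<open>A \<noteq> {}\<close> have "S \<noteq> {}" by auto
    have "nat (s mod int n) < n" using assms by (simp add: nat_less_iff)
    then have "A \<inter> window n t (nat (s mod int n)) \<noteq> {}"
      using independent_onD[OF windows S(1) \<open>S \<noteq> {}\<close>] S(2) by simp
    then show "A \<inter> ctrans n t s \<noteq> {}"
      using window_subset_ctrans[OF assms] by blast
  qed
qed

end
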